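(* Let $n>2$ be an integer, $a\in\mathbb{R}$ with $a\ne0$, $b\in\{1,-1\}$ and $c\in\mathbb{R}$. Let $M=m_n(a,b,c)$ be the $(n+1)\times(n+1)$ symmetric matrix with rows/columns indexed $0,\dots,n$, $(0,0)$-entry $-nc$, $(0,j)$- and $(j,0)$-entries $b$ for $j=1,\dots,n$, and lower-right $n\times n$ block the circulant $\mathrm{circ}(c,a,0,\dots,0,a)$ (diagonal $c$, entries $a$ at positions $(j,j')$ with $j'\equiv j\pm1\pmod n$, zeros elsewhere). Put $\varphi=2\pi/n$, $q=\lfloor n/2\rfloor$ and \[c_k=\frac{4a^2\cos(k\varphi)\bigl(1-\cos(k\varphi)\bigr)+n}{2(n+1)a\bigl(\cos(k\varphi)-1\bigr)},\qquad k=1,\dots,q.\] Then the number of distinct eigenvalues of $M$ is \[|\sigma(M)|=\begin{cases}\lfloor n/2\rfloor+1,& \text{if } c\in\{c_1,\dots,c_q\},\\ \lfloor n/2\rfloor+2,&\text{otherwise.}\end{cases}\] *)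

theory Defs
  imports Complex_Main "Jordan_Normal_Form.Matrix" "Jordan_Normal_Form.Char_Poly"
begin

definition mn :: "nat \<Rightarrow> real \<Rightarrow> real \<Rightarrow> real \<Rightarrow> real mat" where
  "mn n a b c = mat (n+1) (n+1) (\<lambda>(i,j).
      if i = 0 \<and> j = 0 then - (real n * c)
      else if i = 0 \<or> j = 0 then b
      else if i = j then c
      else if (int i - int j) mod int n \<in> {1, int n - 1} then a
      else 0)"

definition ck :: "nat \<Rightarrow> real \<Rightarrow> nat \<Rightarrow> real" where
  "ck n a k = (let \<phi> = 2 * pi / real n in
     (4 * a^2 * cos (real k * \<phi>) * (1 - cos (real k * \<phi>)) + real n) /
     (2 * (real n + 1) * a * (cos (real k * \<phi>) - 1)))"

definition spectrum_set :: "real mat \<Rightarrow> real set" where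
  "spectrum_set M = {e. eigenvalue M e}"

end

theory Submission
  imports Defs "HOL-Library.Quadratic_Discriminant"
begin

text \<open>
  Vectors vanishing at coordinate 0 whose cycle coordinates 1, ..., n sum to zero form an invariant
  subspace on which m_n(a,b,c) acts as the circulant circ(c,a,0,...,0,a); it contributes the
  eigenvalues c + 2a cos(k\<phi>), 1 \<le> k < n, which take exactly \<lfloor>n/2\<rfloor> distinct values.
  Conversely, the discrete Fourier coefficients of an eigenvector for any other eigenvalue e vanish,
  so its cycle coordinates are constant and the eigen-equation collapses to the equitable quotient
  on {0}, {1, ..., n}: (e + nc)(e - c - 2a) = n, which has two distinct real roots.  The two
  families overlap exactly when c + 2a cos(k\<phi>) solves the quadratic, i.e. when c = c_k, and this
  happens for at most one k because c_k is an injective function of cos(k\<phi>) < 1.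
\<close>

section \<open>Cyclic neighbours and the action of m_n\<close>

definition cyc_prev :: "nat \<Rightarrow> nat \<Rightarrow> nat" where
  "cyc_prev n j = (if j = 1 then n else j - 1)"

definition cyc_next :: "nat \<Rightarrow> nat \<Rightarrow> nat" where
  "cyc_next n j = (if j = n then 1 else j + 1)"

lemma cyc_neighbours_in_range:
  assumes "i \<in> {1..n}"
  shows "cyc_prev n i \<in> {1..n}" "cyc_next n i \<in> {1..n}"
  using assms unfolding cyc_prev_def cyc_next_def by auto

lemma cyc_adjacent_iff:
  assumes "n > 2" "i \<in> {1..n}" "j \<in> {1..n}" "i \<noteq> j"
  shows "(int i - int j) mod int n \<in> {1, int n - 1} \<longleftrightarrow> j = cyc_prev n i \<or> j = cyc_next n i"
proof (cases "j < i")
  case True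
  then have "(int i - int j) mod int n = int i - int j"
    using assms by (intro mod_pos_pos_trivial) auto
  then show ?thesis using True assms unfolding cyc_prev_def cyc_next_def by auto
next
  case False
  then have "(int i - int j) mod int n = int i - int j + int n"
    using assms by (subst mod_add_self2[symmetric], intro mod_pos_pos_trivial) auto
  then show ?thesis using False assms unfolding cyc_prev_def cyc_next_def by auto
qed

lemma mn_carrier: "mn n a b c \<in> carrier_mat (n+1) (n+1)"
  unfolding mn_def by auto

lemma mn_mult_vec_nth_0:
  assumes "v \<in> carrier_vec (n+1)"
  shows "(mn n a b c *\<^sub>v v) $ 0 = - (real n * c) * v$0 + b * (\<Sum>j\<in>{1..n}. v$j)"
proof -
  have "(mn n a b c *\<^sub>v v) $ 0 = (\<Sum>j\<in>{0..<n+1}. mn n a b c $$ (0,j) * v $ j)"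
    using assms mn_carrier[of n a b c] by (simp add: scalar_prod_def)
  also have "\<dots> = mn n a b c $$ (0,0) * v $ 0 + (\<Sum>j\<in>{1..n}. mn n a b c $$ (0,j) * v $ j)"
    by (simp add: sum.atLeast_Suc_atMost atLeastLessThanSuc_atLeastAtMost)
  also have "\<dots> = - (real n * c) * v$0 + b * (\<Sum>j\<in>{1..n}. v$j)"
    unfolding mn_def by (simp add: sum_distrib_left)
  finally show ?thesis .
qed

lemma mn_mult_vec_nth:
  assumes "n > 2" "v \<in> carrier_vec (n+1)" "i \<in> {1..n}"
  shows "(mn n a b c *\<^sub>v v) $ i = b * v$0 + c * v$i + a * v$(cyc_prev n i) + a * v$(cyc_next n i)"
proof -
  define p q where "p = cyc_prev n i" and "q = cyc_next n i"
  have pq: "p \<in> {1..n}" "q \<in> {1..n}" "p \<noteq> i" "q \<noteq> i" "p \<noteq> q"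
    using assms unfolding p_def q_def cyc_prev_def cyc_next_def by auto
  have entry: "mn n a b c $$ (i,j) * v $ j = (if j = 0 then b * v$0 else 0)
      + (if j = i then c * v$i else 0) + (if j = p then a * v$p else 0) + (if j = q then a * v$q else 0)"
    if "j < n+1" for j
  proof (cases "j = 0 \<or> j = i")
    case True then show ?thesis using pq assms that unfolding mn_def by auto
  next
    case False
    then have "mn n a b c $$ (i,j) = (if j = p \<or> j = q then a else 0)"
      using cyc_adjacent_iff[of n i j] assms that unfolding mn_def p_def q_def by auto
    then show ?thesis using pq False by auto
  qed
  have "(mn n a b c *\<^sub>v v) $ i = (\<Sum>j\<in>{0..<n+1}. mn n a b c $$ (i,j) * v $ j)"
    using assms mn_carrier[of n a b c] by (simp add: scalar_prod_def)
  also have "\<dots> = (\<Sum>j\<in>{0..<n+1}. (if j = 0 then b * v$0 else 0)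
      + (if j = i then c * v$i else 0) + (if j = p then a * v$p else 0) + (if j = q then a * v$q else 0))"
    using entry by (intro sum.cong) auto
  also have "\<dots> = b * v$0 + c * v$i + a * v$p + a * v$q"
    unfolding sum.distrib sum.delta using pq assms by auto
  finally show ?thesis unfolding p_def q_def .
qed

lemma eigenvalue_mn_by_rows:
  assumes "v \<in> carrier_vec (n+1)" "v \<noteq> 0\<^sub>v (n+1)"
    and "(mn n a b c *\<^sub>v v) $ 0 = e * v $ 0"
    and "\<And>i. i \<in> {1..n} \<Longrightarrow> (mn n a b c *\<^sub>v v) $ i = e * v $ i"
  shows "eigenvalue (mn n a b c) e"
proof -
  have "mn n a b c *\<^sub>v v = e \<cdot>\<^sub>v v"
  proof (rule eq_vecI)
    fix i assume "i < dim_vec (e \<cdot>\<^sub>v v)"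
    then have "i = 0 \<or> i \<in> {1..n}" using assms(1) by auto
    then show "(mn n a b c *\<^sub>v v) $ i = (e \<cdot>\<^sub>v v) $ i"
      using assms \<open>i < dim_vec (e \<cdot>\<^sub>v v)\<close> by auto
  qed (use assms(1) mn_carrier[of n a b c] in simp)
  then show ?thesis
    unfolding eigenvalue_def eigenvector_def using assms(1,2) mn_carrier[of n a b c] by auto
qed

lemma sum_cyc_prev_shift:
  fixes z :: "'a :: comm_ring_1"
  assumes "z ^ n = 1"
  shows "(\<Sum>j\<in>{1..n}. f (cyc_prev n j) * z ^ j) = z * (\<Sum>j\<in>{1..n}. f j * z ^ j)"
proof -
  have "(\<Sum>j\<in>{1..n}. f (cyc_prev n j) * z ^ j) = (\<Sum>j\<in>{1..n}. f j * z ^ cyc_next n j)"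
    by (rule sum.reindex_bij_witness[of _ "cyc_next n" "cyc_prev n"]) (auto simp: cyc_prev_def cyc_next_def)
  also have "\<dots> = (\<Sum>j\<in>{1..n}. z * (f j * z ^ j))"
    using assms by (intro sum.cong) (auto simp: cyc_next_def)
  finally show ?thesis by (simp add: sum_distrib_left)
qed

lemma sum_cyc_next_shift:
  fixes z :: "'a :: comm_ring_1"
  assumes "z ^ n = 1"
  shows "z * (\<Sum>j\<in>{1..n}. f (cyc_next n j) * z ^ j) = (\<Sum>j\<in>{1..n}. f j * z ^ j)"
proof -
  have "(\<Sum>j\<in>{1..n}. f (cyc_next n j) * z ^ j) = (\<Sum>j\<in>{1..n}. f j * z ^ cyc_prev n j)"
    by (rule sum.reindex_bij_witness[of _ "cyc_prev n" "cyc_next n"]) (auto simp: cyc_prev_def cyc_next_def)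
  then have "z * (\<Sum>j\<in>{1..n}. f (cyc_next n j) * z ^ j) = (\<Sum>j\<in>{1..n}. f j * (z * z ^ cyc_prev n j))"
    by (simp add: sum_distrib_left mult.left_commute)
  also have "\<dots> = (\<Sum>j\<in>{1..n}. f j * z ^ j)"
  proof (intro sum.cong refl)
    fix j :: nat assume "j \<in> {1..n}"
    then consider "j = 1" | "j = Suc (j - 1)" "cyc_prev n j = j - 1"
      by (force simp: cyc_prev_def)
    then show "f j * (z * z ^ cyc_prev n j) = f j * z ^ j"
    proof cases
      case 1 then show ?thesis using assms by (simp add: cyc_prev_def)
    next
      case 2 then show ?thesis by (metis power_Suc)
    qed
  qed
  finally show ?thesis .
qed

section \<open>Roots of unity\<close>

definition primitive_root_of_unity :: "'a :: field \<Rightarrow> nat \<Rightarrow> bool" where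
  "primitive_root_of_unity \<omega> n \<longleftrightarrow> \<omega> ^ n = 1 \<and> (\<forall>m. 0 < m \<and> m < n \<longrightarrow> \<omega> ^ m \<noteq> 1)"

lemma sum_powers_root_of_unity:
  fixes z :: "'a :: field"
  assumes "z ^ n = 1" "z \<noteq> 1"
  shows "(\<Sum>k<n. z ^ k) = 0" "(\<Sum>j\<in>{1..n}. z ^ j) = 0"
  using assms by (simp_all add: sum_gp_strict sum_gp)

lemma primitive_root_of_unity_cis:
  assumes "n > 0"
  shows "primitive_root_of_unity (cis (2 * pi / real n)) n"
  unfolding primitive_root_of_unity_def
proof (intro conjI allI impI)
  show "cis (2 * pi / real n) ^ n = 1" using assms by (simp add: DeMoivre)
  fix m assume m: "0 < m \<and> m < n"
  show "cis (2 * pi / real n) ^ m \<noteq> 1"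
  proof
    assume "cis (2 * pi / real n) ^ m = 1"
    then have "cos (real m * (2 * pi / real n)) = 1"
      by (metis DeMoivre cis.sel(1) one_complex.sel(1))
    then obtain i :: int where "real m * (2 * pi / real n) = of_int i * 2 * pi"
      using cos_one_2pi_int by blast
    then have "real m = real_of_int i * real n"
      using assms by (simp add: field_simps)
    then have "int m = i * int n"
      by (metis of_int_eq_iff of_int_mult of_int_of_nat_eq)
    moreover have "i * int n \<le> 0 \<or> int n \<le> i * int n"
      using mult_right_mono[of 1 i "int n"] mult_nonpos_nonneg[of i "int n"] by (cases "i \<le> 0") auto
    ultimately show False using m by linarith
  qed
qed

lemma inj_on_primitive_root_power:
  assumes "primitive_root_of_unity \<omega> n"
  shows "inj_on (\<lambda>j. \<omega> ^ j) {1..n}"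
proof (rule linorder_inj_onI')
  fix j l assume jl: "j \<in> {1..n}" "l \<in> {1..n}" "j < l"
  then have "\<omega> \<noteq> 0" using assms by (auto simp: primitive_root_of_unity_def zero_power)
  moreover have "\<omega> ^ l = \<omega> ^ j * \<omega> ^ (l - j)"
    using jl by (simp flip: power_add)
  moreover have "\<omega> ^ (l - j) \<noteq> 1"
    using assms jl unfolding primitive_root_of_unity_def by auto
  ultimately show "\<omega> ^ j \<noteq> \<omega> ^ l" by auto
qed

lemma primitive_root_fourier_inversion:
  fixes \<omega> :: "'a :: field" and y :: "nat \<Rightarrow> 'a"
  assumes \<omega>: "primitive_root_of_unity \<omega> n"
    and coeffs: "\<And>k. 1 \<le> k \<Longrightarrow> k < n \<Longrightarrow> (\<Sum>j\<in>{1..n}. y j * (\<omega> ^ k) ^ j) = 0"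
    and l: "l \<in> {1..n}"
  shows "of_nat n * y l = (\<Sum>j\<in>{1..n}. y j)"
proof -
  have "n > 0" using l by simp
  then have "\<omega> \<noteq> 0" using \<omega> by (auto simp: primitive_root_of_unity_def zero_power)
  define F where "F k = (\<Sum>j\<in>{1..n}. y j * (\<omega> ^ k) ^ j)" for k
  define r where "r = inverse (\<omega> ^ l)"
  have "(\<Sum>k<n. F k * r ^ k) = (\<Sum>k<n. if k = 0 then F 0 else 0)"
    using coeffs by (intro sum.cong) (auto simp: F_def)
  also have "\<dots> = (\<Sum>j\<in>{1..n}. y j)"
    using \<open>n > 0\<close> by (simp add: F_def)
  finally have lhs: "(\<Sum>k<n. F k * r ^ k) = (\<Sum>j\<in>{1..n}. y j)" .
  have "(\<Sum>k<n. F k * r ^ k) = (\<Sum>j\<in>{1..n}. y j * (\<Sum>k<n. (\<omega> ^ j * r) ^ k))"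
    unfolding F_def sum_distrib_right sum_distrib_left
    by (subst sum.swap) (simp add: power_mult_distrib mult_ac flip: power_mult)
  also have "\<dots> = (\<Sum>j\<in>{1..n}. if j = l then of_nat n * y l else 0)"
  proof (intro sum.cong refl)
    fix j assume j: "j \<in> {1..n}"
    show "y j * (\<Sum>k<n. (\<omega> ^ j * r) ^ k) = (if j = l then of_nat n * y l else 0)"
    proof (cases "j = l")
      case True then show ?thesis using \<open>\<omega> \<noteq> 0\<close> by (simp add: r_def)
    next
      case False
      have "(\<omega> ^ j * r) ^ n = 1"
        using \<omega> by (simp add: r_def primitive_root_of_unity_def power_mult_distrib
            power_inverse flip: power_mult, simp add: power_mult mult.commute[of _ n])
      moreover have "\<omega> ^ j \<noteq> \<omega> ^ l"
        using inj_on_primitive_root_power[OF \<omega>] j l False by (auto dest: inj_onD)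
      then have "\<omega> ^ j * r \<noteq> 1"
        using \<open>\<omega> \<noteq> 0\<close> by (auto simp: r_def field_simps)
      ultimately show ?thesis
        using sum_powers_root_of_unity(1)[of "\<omega> ^ j * r" n] False by simp
    qed
  qed
  also have "\<dots> = of_nat n * y l" using l by simp
  finally show ?thesis using lhs by simp
qed

lemma mn_eigenvector_fourier:
  fixes z :: complex
  assumes "n > 2" "v \<in> carrier_vec (n+1)" "mn n a b c *\<^sub>v v = e \<cdot>\<^sub>v v"
    and z: "z ^ n = 1" "z \<noteq> 1"
  shows "(\<Sum>j\<in>{1..n}. of_real (v$j) * z^j) * (a * z^2 + (c - e) * z + a) = 0"
proof -
  define V where "V j = (of_real (v$j) :: complex)" for j
  define Y where "Y = (\<Sum>j\<in>{1..n}. V j * z^j)"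
  have row: "of_real e * V j = of_real (b * v$0) + c * V j + a * V (cyc_prev n j) + a * V (cyc_next n j)"
    if "j \<in> {1..n}" for j
  proof -
    have "(mn n a b c *\<^sub>v v) $ j = e * v $ j"
      using arg_cong[OF assms(3), of "\<lambda>w. w $ j"] assms(2) that by simp
    then show ?thesis
      using mn_mult_vec_nth[OF assms(1,2) that, of a b c] unfolding V_def
      by (metis of_real_add of_real_mult)
  qed
  \<comment> \<open>The border column contributes b v_0 (z + ... + z^n), which vanishes since z \<noteq> 1.\<close>
  have "of_real e * Y = (\<Sum>j\<in>{1..n}. of_real (b * v$0) * z^j + c * (V j * z^j)
      + a * (V (cyc_prev n j) * z^j) + a * (V (cyc_next n j) * z^j))"
    unfolding Y_def sum_distrib_left
  proof (intro sum.cong refl)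
    fix j assume "j \<in> {1..n}"
    have "of_real e * (V j * z^j) = (of_real e * V j) * z^j" by (simp only: mult.assoc)
    then show "of_real e * (V j * z^j) = of_real (b * v$0) * z^j + c * (V j * z^j)
        + a * (V (cyc_prev n j) * z^j) + a * (V (cyc_next n j) * z^j)"
      unfolding row[OF \<open>j \<in> {1..n}\<close>] by (simp add: algebra_simps)
  qed
  also have "\<dots> = c * Y + a * (z * Y) + a * (\<Sum>j\<in>{1..n}. V (cyc_next n j) * z^j)"
    using sum_powers_root_of_unity(2)[OF z] sum_cyc_prev_shift[OF z(1), of V]
    by (simp add: Y_def sum.distrib flip: sum_distrib_left)
  finally have "z * (of_real e * Y) = z * (c * Y + a * (z * Y)) + a * Y"
    using sum_cyc_next_shift[OF z(1), of V] unfolding Y_def by (simp add: algebra_simps)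
  then have "Y * (a * z^2 + (c - e) * z + a) = 0"
    by (simp add: algebra_simps power2_eq_square)
  then show ?thesis unfolding Y_def V_def by simp
qed

lemma cis_palindromic_quadratic_root:
  fixes a c e \<theta> :: real
  assumes "a * cis \<theta> ^ 2 + (c - e) * cis \<theta> + a = 0"
  shows "e = c + 2 * a * cos \<theta>"
proof -
  have "(a * cis \<theta> ^ 2 + (c - e) * cis \<theta> + a) * cis (- \<theta>) = a * cis \<theta> + (c - e) + a * cis (- \<theta>)"
    using cis_mult[of \<theta> "- \<theta>"] by (simp add: ring_distribs power2_eq_square mult.assoc)
  then have "Re (a * cis \<theta> + (c - e) + a * cis (- \<theta>)) = 0" using assms by simp
  then show ?thesis by simp
qed

section \<open>The eigenvalues of m_n\<close>

definition circ_eigenvalue :: "nat \<Rightarrow> real \<Rightarrow> real \<Rightarrow> nat \<Rightarrow> real" where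
  "circ_eigenvalue n a c k = c + 2 * a * cos (real k * (2 * pi / real n))"

text \<open>
  The eigenvalues of the quotient matrix [[-nc, nb], [b, c + 2a]] of the partition {0}, {1, ..., n};
  for b^2 = 1 its characteristic polynomial is (e + nc)(e - c - 2a) - n.
\<close>
definition quotient_eigenvalues :: "nat \<Rightarrow> real \<Rightarrow> real \<Rightarrow> real set" where
  "quotient_eigenvalues n a c = {e. (e + real n * c) * (e - c - 2 * a) = real n}"

lemma sum_cos_root_angle:
  assumes "k \<in> {1..<n}"
  shows "(\<Sum>j\<in>{1..n}. cos (real j * (real k * (2 * pi / real n)))) = 0"
proof -
  define z where "z = cis (2 * pi / real n) ^ k"
  have \<omega>: "primitive_root_of_unity (cis (2 * pi / real n)) n"
    using assms by (intro primitive_root_of_unity_cis) auto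
  then have "z ^ n = 1" "z \<noteq> 1"
    using assms unfolding z_def primitive_root_of_unity_def
    by (metis power_mult mult.commute power_one, auto)
  then have "(\<Sum>j\<in>{1..n}. z ^ j) = 0" by (rule sum_powers_root_of_unity(2))
  then have "Re (\<Sum>j\<in>{1..n}. z ^ j) = 0" by (simp only: zero_complex.sel)
  then show ?thesis by (simp add: z_def DeMoivre mult.commute)
qed

lemma eigenvalue_mn_circ_eigenvalue:
  assumes n: "n > 2" and k: "k \<in> {1..<n}"
  shows "eigenvalue (mn n a b c) (circ_eigenvalue n a c k)"
proof -
  define \<theta> where "\<theta> = real k * (2 * pi / real n)"
  define v where "v = vec (n+1) (\<lambda>i. if i = 0 then 0 else cos (real i * \<theta>))"
  have v: "v \<in> carrier_vec (n+1)" "v $ 0 = 0" "\<And>i. i \<in> {1..n} \<Longrightarrow> v $ i = cos (real i * \<theta>)"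
    unfolding v_def by auto
  have periodic: "cos (real (j + n) * \<theta>) = cos (real j * \<theta>)" for j
  proof -
    have "real (j + n) * \<theta> = real j * \<theta> + real (2 * k) * pi"
      using n unfolding \<theta>_def by (simp add: field_simps)
    then show ?thesis by (simp add: cos_add)
  qed
  have v_prev: "v $ cyc_prev n i = cos (real i * \<theta> - \<theta>)" if "i \<in> {1..n}" for i
  proof (cases "i = 1")
    case True then show ?thesis using periodic[of 0] n v(3)[of n] by (simp add: cyc_prev_def)
  next
    case False
    then have "i - 1 \<in> {1..n}" "real (i - 1) = real i - 1" using that by auto
    then show ?thesis using False v(3)[of "i - 1"] by (simp add: cyc_prev_def algebra_simps)
  qed
  have v_next: "v $ cyc_next n i = cos (real i * \<theta> + \<theta>)" if "i \<in> {1..n}" for i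
    using that periodic[of 1] n v(3)[of 1] v(3)[of "i + 1"]
    by (cases "i = n") (auto simp: cyc_next_def algebra_simps)
  show ?thesis unfolding circ_eigenvalue_def \<theta>_def[symmetric]
  proof (rule eigenvalue_mn_by_rows[OF v(1)])
    show "v \<noteq> 0\<^sub>v (n+1)"
      using v(3)[of n] periodic[of 0] n by (auto dest: arg_cong[of _ _ "\<lambda>v. v $ n"])
    have "(\<Sum>j\<in>{1..n}. v $ j) = 0"
      using sum_cos_root_angle[OF k] v(3) by (simp add: \<theta>_def)
    then show "(mn n a b c *\<^sub>v v) $ 0 = (c + 2 * a * cos \<theta>) * v $ 0"
      using mn_mult_vec_nth_0[OF v(1)] v(2) by simp
    fix i assume i: "i \<in> {1..n}"
    have "(mn n a b c *\<^sub>v v) $ i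
        = c * cos (real i * \<theta>) + a * (cos (real i * \<theta> - \<theta>) + cos (real i * \<theta> + \<theta>))"
      using mn_mult_vec_nth[OF n v(1) i, of a b c] v_prev[OF i] v_next[OF i] v(2) v(3)[OF i]
      by (simp add: distrib_left)
    also have "\<dots> = (c + 2 * a * cos \<theta>) * v $ i"
      using v(3)[OF i] by (simp add: cos_add cos_diff algebra_simps)
    finally show "(mn n a b c *\<^sub>v v) $ i = (c + 2 * a * cos \<theta>) * v $ i" .
  qed
qed

lemma eigenvalue_mn_quotient_eigenvalue:
  assumes n: "n > 2" and b: "b \<in> {1, -1}" and e: "e \<in> quotient_eigenvalues n a c"
  shows "eigenvalue (mn n a b c) e"
proof -
  define v where "v = vec (n+1) (\<lambda>i. if i = 0 then b * (e - c - 2 * a) else 1)"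
  have v: "v \<in> carrier_vec (n+1)" "v $ 0 = b * (e - c - 2 * a)" "\<And>i. i \<in> {1..n} \<Longrightarrow> v $ i = 1"
    unfolding v_def by auto
  have bv: "b * v $ 0 = e - c - 2 * a"
    using b v(2) by auto
  show ?thesis
  proof (rule eigenvalue_mn_by_rows[OF v(1)])
    show "v \<noteq> 0\<^sub>v (n+1)"
      using v(3)[of 1] n by (auto dest: arg_cong[of _ _ "\<lambda>v. v $ 1"])
    have "(\<Sum>j\<in>{1..n}. v $ j) = real n" using v(3) by simp
    then have "(mn n a b c *\<^sub>v v) $ 0 = b * (real n - real n * c * (e - c - 2 * a))"
      using mn_mult_vec_nth_0[OF v(1), of a b c] v(2) by (simp add: algebra_simps)
    also have "\<dots> = b * (real n - (e + real n * c) * (e - c - 2 * a)) + e * v $ 0"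
      unfolding v(2) by (simp add: algebra_simps)
    also have "\<dots> = e * v $ 0"
      using e unfolding quotient_eigenvalues_def by simp
    finally show "(mn n a b c *\<^sub>v v) $ 0 = e * v $ 0" .
    fix i assume i: "i \<in> {1..n}"
    show "(mn n a b c *\<^sub>v v) $ i = e * v $ i"
      using mn_mult_vec_nth[OF n v(1) i] v(3) cyc_neighbours_in_range[OF i] i bv by simp
  qed
qed

lemma mn_eigenvector_constant_on_cycle:
  assumes n: "n > 2" and v: "v \<in> carrier_vec (n+1)" and ev: "mn n a b c *\<^sub>v v = e \<cdot>\<^sub>v v"
    and e: "e \<notin> circ_eigenvalue n a c ` {1..<n}" and l: "l \<in> {1..n}"
  shows "real n * v $ l = (\<Sum>j\<in>{1..n}. v $ j)"
proof -
  define \<omega> where "\<omega> = cis (2 * pi / real n)"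
  have \<omega>: "primitive_root_of_unity \<omega> n"
    unfolding \<omega>_def using n by (intro primitive_root_of_unity_cis) auto
  have "(\<Sum>j\<in>{1..n}. of_real (v $ j) * (\<omega> ^ k) ^ j) = 0" if k: "1 \<le> k" "k < n" for k
  proof -
    have z: "(\<omega> ^ k) ^ n = 1" "\<omega> ^ k \<noteq> 1"
      using \<omega> k unfolding primitive_root_of_unity_def by (metis power_mult mult.commute power_one, auto)
    have "a * (\<omega> ^ k) ^ 2 + (c - e) * \<omega> ^ k + a \<noteq> 0"
    proof
      assume "a * (\<omega> ^ k) ^ 2 + (c - e) * \<omega> ^ k + a = 0"
      moreover have "\<omega> ^ k = cis (real k * (2 * pi / real n))"
        unfolding \<omega>_def by (rule DeMoivre)
      ultimately have "e = circ_eigenvalue n a c k"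
        unfolding circ_eigenvalue_def by (simp add: cis_palindromic_quadratic_root)
      then show False using e k by auto
    qed
    then show ?thesis using mn_eigenvector_fourier[OF n v ev z] by simp
  qed
  from primitive_root_fourier_inversion[OF \<omega> this l]
  have "of_real (real n * v $ l) = (of_real (\<Sum>j\<in>{1..n}. v $ j) :: complex)" by simp
  then show ?thesis by (rule of_real_eq_iff[THEN iffD1])
qed

lemma mn_cycle_constant_eigenvector_quotient:
  assumes n: "n > 2" and b: "b \<in> {1, -1}"
    and v: "v \<in> carrier_vec (n+1)" "v \<noteq> 0\<^sub>v (n+1)" and ev: "mn n a b c *\<^sub>v v = e \<cdot>\<^sub>v v"
    and vt: "\<And>j. j \<in> {1..n} \<Longrightarrow> v $ j = t"
  shows "e \<in> quotient_eigenvalues n a c"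
proof -
  have row: "(mn n a b c *\<^sub>v v) $ i = e * v $ i" if "i \<le> n" for i
    using arg_cong[OF ev, of "\<lambda>w. w $ i"] v(1) that by simp
  have row_1: "(e - c - 2 * a) * t = b * v $ 0"
    using row[of 1] mn_mult_vec_nth[OF n v(1), of 1 a b c] vt cyc_neighbours_in_range[of 1 n] n
    by (simp add: algebra_simps)
  have "(\<Sum>j\<in>{1..n}. v $ j) = real n * t" using vt by simp
  then have row_0: "(e + real n * c) * v $ 0 = b * real n * t"
    using row[of 0] mn_mult_vec_nth_0[OF v(1), of a b c] by (simp add: algebra_simps)
  have "t \<noteq> 0"
  proof
    assume "t = 0"
    then have "v $ 0 = 0" using row_1 b by auto
    then have "v $ i = 0" if "i < n + 1" for i
      using vt[of i] \<open>t = 0\<close> that by (cases "i = 0") auto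
    then have "v = 0\<^sub>v (n+1)"
      using v(1) by (intro eq_vecI) auto
    then show False using v(2) by contradiction
  qed
  have "(e + real n * c) * (e - c - 2 * a) * t = (e + real n * c) * ((e - c - 2 * a) * t)"
    by (rule mult.assoc)
  also have "\<dots> = b * ((e + real n * c) * v $ 0)"
    unfolding row_1 by (rule mult.left_commute)
  also have "\<dots> = b * b * real n * t"
    unfolding row_0 by (simp only: mult.assoc)
  finally have "(e + real n * c) * (e - c - 2 * a) * t = b * b * real n * t" .
  then show ?thesis
    using b \<open>t \<noteq> 0\<close> unfolding quotient_eigenvalues_def by auto
qed

lemma eigenvalue_mn_cases:
  assumes n: "n > 2" and b: "b \<in> {1, -1}" and "eigenvalue (mn n a b c) e"
  shows "e \<in> circ_eigenvalue n a c ` {1..<n} \<union> quotient_eigenvalues n a c"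
proof (cases "e \<in> circ_eigenvalue n a c ` {1..<n}")
  case False
  obtain v where v: "v \<in> carrier_vec (n+1)" "v \<noteq> 0\<^sub>v (n+1)" and ev: "mn n a b c *\<^sub>v v = e \<cdot>\<^sub>v v"
    using assms(3) mn_carrier[of n a b c] unfolding eigenvalue_def eigenvector_def by auto
  have "v $ j = (\<Sum>j\<in>{1..n}. v $ j) / real n" if "j \<in> {1..n}" for j
    using mn_eigenvector_constant_on_cycle[OF n v(1) ev False that] n by (simp add: field_simps)
  then show ?thesis
    using mn_cycle_constant_eigenvector_quotient[OF n b v ev] by blast
qed simp

lemma circ_eigenvalue_reflect:
  assumes "k \<le> n"
  shows "circ_eigenvalue n a c (n - k) = circ_eigenvalue n a c k"
proof (cases "n = 0")
  case False
  then have "real (n - k) * (2 * pi / real n) = 2 * pi - real k * (2 * pi / real n)"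
    using assms by (simp add: of_nat_diff field_simps)
  then show ?thesis unfolding circ_eigenvalue_def by simp
qed (use assms in simp)

lemma circ_eigenvalue_image_half:
  assumes "n > 0"
  shows "circ_eigenvalue n a c ` {1..<n} = circ_eigenvalue n a c ` {1..n div 2}"
proof
  show "circ_eigenvalue n a c ` {1..n div 2} \<subseteq> circ_eigenvalue n a c ` {1..<n}"
    using assms by (intro image_mono) auto
  show "circ_eigenvalue n a c ` {1..<n} \<subseteq> circ_eigenvalue n a c ` {1..n div 2}"
  proof (rule image_subsetI)
    fix k assume k: "k \<in> {1..<n}"
    show "circ_eigenvalue n a c k \<in> circ_eigenvalue n a c ` {1..n div 2}"
    proof (cases "k \<le> n div 2")
      case False
      then have "n - k \<in> {1..n div 2}" using k by auto
      then show ?thesis using circ_eigenvalue_reflect[of k n a c] k by (metis imageI atLeastLessThan_iff less_imp_le)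
    qed (use k in auto)
  qed
qed

lemma spectrum_set_mn:
  assumes "n > 2" "b \<in> {1, -1}"
  shows "spectrum_set (mn n a b c) = circ_eigenvalue n a c ` {1..n div 2} \<union> quotient_eigenvalues n a c"
  using eigenvalue_mn_cases[OF assms] eigenvalue_mn_circ_eigenvalue[OF assms(1)]
    eigenvalue_mn_quotient_eigenvalue[OF assms] circ_eigenvalue_image_half[of n a c] assms(1)
  unfolding spectrum_set_def by fastforce

section \<open>Counting the distinct eigenvalues\<close>

lemma root_angle_bounds:
  assumes "k \<in> {1..n div 2}"
  shows "0 < real k * (2 * pi / real n)" "real k * (2 * pi / real n) \<le> pi"
proof -
  have "2 * k \<le> n" using assms by auto
  then have "real k * (2 * pi) \<le> pi * real n"
    by (metis mult.commute mult.left_commute of_nat_mono of_nat_mult of_nat_numeral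
        mult_left_mono pi_ge_zero)
  moreover have "real n > 0" using assms by auto
  ultimately show "0 < real k * (2 * pi / real n)" "real k * (2 * pi / real n) \<le> pi"
    using assms by (simp_all add: field_simps)
qed

lemma cos_root_angle_lt_1:
  assumes "k \<in> {1..n div 2}"
  shows "cos (real k * (2 * pi / real n)) < 1"
proof (rule ccontr)
  let ?x = "real k * (2 * pi / real n)"
  assume "\<not> cos ?x < 1"
  then have "cos ?x = cos 0" using cos_le_one[of ?x] by (simp only: cos_zero)
  then have "?x = 0"
    using cos_inj_pi[of ?x 0] root_angle_bounds[OF assms] by simp
  then show False using root_angle_bounds(1)[OF assms] by linarith
qed

lemma inj_on_cos_root_angle: "inj_on (\<lambda>k. cos (real k * (2 * pi / real n))) {1..n div 2}"
proof (rule inj_onI)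
  fix j k assume j: "j \<in> {1..n div 2}" and k: "k \<in> {1..n div 2}"
    and "cos (real j * (2 * pi / real n)) = cos (real k * (2 * pi / real n))"
  then have "real j * (2 * pi / real n) = real k * (2 * pi / real n)"
    using cos_inj_pi[of "real j * (2 * pi / real n)" "real k * (2 * pi / real n)"]
      root_angle_bounds[OF j] root_angle_bounds[OF k] by simp
  then show "j = k" using root_angle_bounds(1)[OF j] by (cases "n = 0") auto
qed

lemma card_circ_eigenvalue_image:
  assumes "a \<noteq> 0"
  shows "card (circ_eigenvalue n a c ` {1..n div 2}) = n div 2"
proof -
  have "inj_on (circ_eigenvalue n a c) {1..n div 2}"
  proof (rule inj_onI)
    fix j k assume jk: "j \<in> {1..n div 2}" "k \<in> {1..n div 2}"
      and "circ_eigenvalue n a c j = circ_eigenvalue n a c k"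
    then have "cos (real j * (2 * pi / real n)) = cos (real k * (2 * pi / real n))"
      using assms unfolding circ_eigenvalue_def by simp
    with inj_onD[OF inj_on_cos_root_angle] jk show "j = k" by blast
  qed
  then show ?thesis by (simp add: card_image)
qed

lemma card_quadratic_roots:
  fixes a b c :: real
  assumes "a \<noteq> 0" "discrim a b c > 0"
  shows "card {x. a * x^2 + b * x + c = 0} = 2"
proof -
  have "{x. a * x^2 + b * x + c = 0} =
      {(-b + sqrt (discrim a b c)) / (2 * a), (-b - sqrt (discrim a b c)) / (2 * a)}"
    using discriminant_nonneg[OF assms(1)] assms(2) by auto
  moreover have "(-b + sqrt (discrim a b c)) / (2 * a) \<noteq> (-b - sqrt (discrim a b c)) / (2 * a)"
    using assms by (simp add: divide_cancel_right)
  ultimately show ?thesis by simp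
qed

lemma card_quotient_eigenvalues:
  assumes "n > 0"
  shows "card (quotient_eigenvalues n a c) = 2"
proof -
  define p where "p = real n * c - c - 2 * a"
  define q where "q = - (real n * c * (c + 2 * a)) - real n"
  have "quotient_eigenvalues n a c = {e. 1 * e^2 + p * e + q = 0}"
    unfolding quotient_eigenvalues_def p_def q_def by (auto simp: algebra_simps power2_eq_square)
  moreover have "discrim 1 p q = (real n * c + c + 2 * a)^2 + 4 * real n"
    unfolding discrim_def p_def q_def by (simp add: algebra_simps power2_eq_square)
  then have "discrim 1 p q > 0"
    using assms by (simp add: add_nonneg_pos)
  ultimately show ?thesis using card_quadratic_roots[of 1 p q] by simp
qed

lemma circ_eigenvalue_in_quotient_iff:
  assumes "a \<noteq> 0" "k \<in> {1..n div 2}"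
  shows "circ_eigenvalue n a c k \<in> quotient_eigenvalues n a c \<longleftrightarrow> c = ck n a k"
proof -
  define x where "x = cos (real k * (2 * pi / real n))"
  have "2 * (real n + 1) * a * (x - 1) \<noteq> 0"
    using cos_root_angle_lt_1[OF assms(2)] assms(1) unfolding x_def by simp
  moreover have "circ_eigenvalue n a c k \<in> quotient_eigenvalues n a c \<longleftrightarrow>
      c * (2 * (real n + 1) * a * (x - 1)) = 4 * a^2 * x * (1 - x) + real n"
    unfolding circ_eigenvalue_def quotient_eigenvalues_def x_def[symmetric]
    by (simp add: algebra_simps power2_eq_square)
  ultimately show ?thesis
    unfolding ck_def Let_def x_def[symmetric] by (simp add: eq_divide_eq)
qed

lemma ck_formula_inj:
  fixes x y a N :: real
  assumes "x < 1" "y < 1" "a \<noteq> 0" "N > 0"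
    and "(4*a^2*x*(1-x) + N) / (2*(N+1)*a*(x-1)) = (4*a^2*y*(1-y) + N) / (2*(N+1)*a*(y-1))"
  shows "x = y"
proof -
  have "2*(N+1)*a \<noteq> 0" "x - 1 \<noteq> 0" "y - 1 \<noteq> 0" using assms by auto
  then have "(2*(N+1)*a) * ((4*a^2*x*(1-x) + N) * (y-1)) = (2*(N+1)*a) * ((4*a^2*y*(1-y) + N) * (x-1))"
    using assms(5) by (simp add: frac_eq_eq mult_ac)
  then have "(4*a^2*x*(1-x) + N) * (y-1) = (4*a^2*y*(1-y) + N) * (x-1)"
    using \<open>2*(N+1)*a \<noteq> 0\<close> by simp
  then have "(x - y) * (4*a^2*((x-1)*(y-1)) + N) = 0"
    by (simp add: algebra_simps power2_eq_square)
  moreover have "(x-1)*(y-1) > 0" using assms by (intro mult_neg_neg) auto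
  then have "4*a^2*((x-1)*(y-1)) + N > 0" using assms by (simp add: add_pos_pos)
  ultimately show ?thesis by simp
qed

lemma inj_on_ck:
  assumes "a \<noteq> 0"
  shows "inj_on (ck n a) {1..n div 2}"
proof (rule inj_onI)
  fix j k assume j: "j \<in> {1..n div 2}" and k: "k \<in> {1..n div 2}" and "ck n a j = ck n a k"
  moreover have "real n > 0" using j by auto
  ultimately have "cos (real j * (2 * pi / real n)) = cos (real k * (2 * pi / real n))"
    using cos_root_angle_lt_1[OF j] cos_root_angle_lt_1[OF k] assms
      ck_formula_inj[of "cos (real j * (2 * pi / real n))" "cos (real k * (2 * pi / real n))" a "real n"]
    unfolding ck_def Let_def by blast
  with inj_onD[OF inj_on_cos_root_angle] j k show "j = k" by blast
qed

lemma card_circ_eigenvalue_image_inter_quotient: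
  assumes "a \<noteq> 0"
  shows "card (circ_eigenvalue n a c ` {1..n div 2} \<inter> quotient_eigenvalues n a c) =
           (if c \<in> ck n a ` {1..n div 2} then 1 else 0)"
proof -
  have inter: "circ_eigenvalue n a c ` {1..n div 2} \<inter> quotient_eigenvalues n a c =
      circ_eigenvalue n a c ` {k \<in> {1..n div 2}. c = ck n a k}"
    using circ_eigenvalue_in_quotient_iff[OF assms] by auto
  show ?thesis
  proof (cases "c \<in> ck n a ` {1..n div 2}")
    case True
    then obtain k0 where k0: "k0 \<in> {1..n div 2}" "c = ck n a k0" by blast
    then have "{k \<in> {1..n div 2}. c = ck n a k} = {k0}"
      using inj_onD[OF inj_on_ck[OF assms]] by blast
    then show ?thesis using inter True by simp
  next
    case False
    then have "{k \<in> {1..n div 2}. c = ck n a k} = {}" by blast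
    then show ?thesis using inter False by simp
  qed
qed

theorem theorem5:
  fixes n :: nat and a b c :: real
  assumes "n > 2" and "a \<noteq> 0" and "b \<in> {1, -1}"
  shows "card (spectrum_set (mn n a b c)) =
           (if c \<in> ck n a ` {1..n div 2} then n div 2 + 1 else n div 2 + 2)"
proof -
  let ?L = "circ_eigenvalue n a c ` {1..n div 2}" and ?R = "quotient_eigenvalues n a c"
  have "card ?R = 2" using card_quotient_eigenvalues assms(1) by simp
  then have "finite ?R" by (intro card_ge_0_finite) simp
  then have "card ?L + card ?R = card (?L \<union> ?R) + card (?L \<inter> ?R)"
    by (intro card_Un_Int) simp_all
  then show ?thesis
    using spectrum_set_mn[OF assms(1,3)] card_circ_eigenvalue_image[OF assms(2)]
      card_circ_eigenvalue_image_inter_quotient[OF assms(2)] \<open>card ?R = 2\<close>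
    by (simp split: if_splits)
qed

end
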